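(* Consider the disclosure model described in the context, and let $d_0$ be the uninformative disclosure policy $d_0(e)=\bar e$ for all $e\in E$. Then $d_0\in\mathcal{D}$, and for every $d\in\mathcal{D}$ we have $\Gamma(d_0)\ge\Gamma(d)$ and $\Pi(d_0)\le\Pi(d)$. That is, $d_0$ induces the highest expected emission and the lowest expected profit among all disclosure policies.
   Context: Emissions lie in $E=[0,\bar e]$ with $\bar e>0$. The firm's type $\theta\in\Theta=[\underline\theta,\bar\theta]$ is private information with a continuous density $f=F'$ on $\Theta$. The firm's profit is $\tilde\pi(\theta,e,\tilde e)$ with actual emission $e$ and market-perceived emission $\tilde e$; it is strictly increasing in $e$ and strictly decreasing in $\tilde e$. Standing assumptions: $\tilde\pi$ is continuous on $\Theta\times E\times E$ and $C^2$ on its interior; $\pi(\theta,e):=\tilde\pi(\theta,e,e)$ is strictly concave in $e$; and $\pi(\theta,0)<\pi(\theta,\bar e)$ for all $\theta$. A disclosure policy is a function $d:E\to E$ (a partition of $E$ into level sets). An emission $e$ is belief-compatible under $d$ if $e\ge e'$ whenever $d(e')=d(e)$; $\tilde E_d$ is the set of such levels. The type-$\theta$ firm chooses $e\in\tilde E_d$ maximizing $\pi(\theta,e)$. $\mathcal{D}$ is the set of policies for which the maximum is attained for every type. For $d\in\mathcal{D}$, $\pi_d(\theta)=\max_{e\in\tilde E_d}\pi(\theta,e)$, and $\gamma_d(\theta)$ is the lowest maximizer (the equilibrium emission). Further, $\Pi(d)=\int_\Theta\pi_d\,dF$ and $\Gamma(d)=\int_\Theta\gamma_d\,dF$. *)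

theory Defs
  imports "HOL-Analysis.Analysis"
begin

definition strictly_concave_on :: "real set \<Rightarrow> (real \<Rightarrow> real) \<Rightarrow> bool" where
  "strictly_concave_on S g \<longleftrightarrow> convex S \<and>
     (\<forall>x\<in>S. \<forall>y\<in>S. x \<noteq> y \<longrightarrow> (\<forall>t::real. 0 < t \<and> t < 1 \<longrightarrow>
        g ((1 - t) * x + t * y) > (1 - t) * g x + t * g y))"

definition C2_on :: "'a::euclidean_space set \<Rightarrow> ('a \<Rightarrow> real) \<Rightarrow> bool" where
  "C2_on S g \<longleftrightarrow> (\<exists>D :: 'a \<Rightarrow> ('a \<Rightarrow>\<^sub>L real). \<exists>D2 :: 'a \<Rightarrow> ('a \<Rightarrow>\<^sub>L ('a \<Rightarrow>\<^sub>L real)).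
      (\<forall>x\<in>S. (g has_derivative blinfun_apply (D x)) (at x)) \<and>
      (\<forall>x\<in>S. (D has_derivative blinfun_apply (D2 x)) (at x)) \<and>
      continuous_on S D2)"

definition emis :: "real \<Rightarrow> real set" where
  "emis ebar = {0..ebar}"

definition belief_compatible :: "real \<Rightarrow> (real \<Rightarrow> real) \<Rightarrow> real set" where
  "belief_compatible ebar d =
     {e \<in> emis ebar. \<forall>e'\<in>emis ebar. d e' = d e \<longrightarrow> e' \<le> e}"

text \<open>The admissible policies \<D>: maps E \<rightarrow> E such that each type attains its maximum
  of prof(theta,e) over the belief-compatible levels. prof theta e = prof~ theta e e.\<close>
definition policies :: "real \<Rightarrow> real set \<Rightarrow> (real \<Rightarrow> real \<Rightarrow> real) \<Rightarrow> (real \<Rightarrow> real) set" where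
  "policies ebar Theta prof = {d. (\<forall>e\<in>emis ebar. d e \<in> emis ebar) \<and>
     (\<forall>\<theta>\<in>Theta. \<exists>e\<in>belief_compatible ebar d. \<forall>e'\<in>belief_compatible ebar d. prof \<theta> e' \<le> prof \<theta> e)}"

text \<open>pi_d(theta): the maximal profit (attained for d in \<D>).\<close>
definition profit_d :: "real \<Rightarrow> (real \<Rightarrow> real \<Rightarrow> real) \<Rightarrow> (real \<Rightarrow> real) \<Rightarrow> real \<Rightarrow> real" where
  "profit_d ebar prof d \<theta> = (SUP e\<in>belief_compatible ebar d. prof \<theta> e)"

definition emission_d :: "real \<Rightarrow> (real \<Rightarrow> real \<Rightarrow> real) \<Rightarrow> (real \<Rightarrow> real) \<Rightarrow> real \<Rightarrow> real" where
  "emission_d ebar prof d \<theta> = (LEAST e. e \<in> belief_compatible ebar d \<and>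
       (\<forall>e'\<in>belief_compatible ebar d. prof \<theta> e' \<le> prof \<theta> e))"

definition expect :: "real \<Rightarrow> real \<Rightarrow> (real \<Rightarrow> real) \<Rightarrow> (real \<Rightarrow> real) \<Rightarrow> real" where
  "expect thl thh f g = (LINT \<theta>:{thl..thh}|lborel. g \<theta> * f \<theta>)"

definition exp_profit where
  "exp_profit thl thh f ebar prof d = expect thl thh f (profit_d ebar prof d)"

definition exp_emission where
  "exp_emission thl thh f ebar prof d = expect thl thh f (emission_d ebar prof d)"

end

theory Submission
  imports Defs
begin

text \<open>Under the uninformative policy the only belief-compatible level is \<open>ebar\<close>, so every
  type emits \<open>ebar\<close> and earns \<open>\<pi>(\<theta>, ebar)\<close>. Under any policy \<open>ebar\<close> is still
  belief-compatible, so the optimal profit is at least \<open>\<pi>(\<theta>, ebar)\<close>, while the equilibrium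
  emission lies in \<open>E\<close> and is thus at most \<open>ebar\<close>. The lowest maximiser exists because a
  strictly concave function takes each value at most twice, and the optimal profit is integrable
  because it is continuous in \<open>\<theta>\<close>, being a supremum of an equicontinuous family.\<close>

lemma strictly_concave_on_gt_min:
  assumes sc: "strictly_concave_on S g" and xy: "x < y" and yz: "y < z"
    and x: "x \<in> S" and z: "z \<in> S"
  shows "g y > min (g x) (g z)"
proof -
  define t where "t = (y - x) / (z - x)"
  have t: "0 < t" "t < 1" using xy yz by (auto simp: t_def field_simps)
  have "t * (z - x) = y - x" using xy yz by (simp add: t_def)
  then have y: "y = (1 - t) * x + t * z" by (simp add: algebra_simps)
  have "(1 - t) * min (g x) (g z) + t * min (g x) (g z) \<le> (1 - t) * g x + t * g z"
    using t by (intro add_mono mult_left_mono) auto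
  also have "\<dots> < g y"
    using sc x z t xy yz unfolding y strictly_concave_on_def by auto
  finally show ?thesis by (simp add: algebra_simps)
qed

lemma strictly_concave_on_level_set_finite:
  assumes sc: "strictly_concave_on S g"
  shows "finite {x \<in> S. g x = c}"
proof -
  let ?L = "{x \<in> S. g x = c}"
  have unordered: "\<not> (x < y \<and> y < z)" if "x \<in> ?L" "y \<in> ?L" "z \<in> ?L" for x y z
    using strictly_concave_on_gt_min[OF sc, of x y z] that by auto
  have two: "?L \<subseteq> {a, b}" if "a \<in> ?L" "b \<in> ?L" "a \<noteq> b" for a b
  proof
    fix e assume e: "e \<in> ?L"
    have "\<not> (a < b \<and> b < e)" "\<not> (a < e \<and> e < b)" "\<not> (b < a \<and> a < e)"
      "\<not> (b < e \<and> e < a)" "\<not> (e < a \<and> a < b)" "\<not> (e < b \<and> b < a)"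
      using unordered that e by blast+
    with \<open>a \<noteq> b\<close> show "e \<in> {a, b}" by auto
  qed
  show ?thesis
  proof (cases "\<exists>a b. a \<in> ?L \<and> b \<in> ?L \<and> a \<noteq> b")
    case True
    then obtain a b where "a \<in> ?L" "b \<in> ?L" "a \<noteq> b" by blast
    then show ?thesis using two finite_subset by blast
  next
    case False
    then have "?L = {} \<or> (\<exists>a. ?L = {a})" by blast
    then show ?thesis by (metis finite.emptyI finite.insertI)
  qed
qed

lemma abs_cSUP_diff_le:
  fixes f g :: "'a \<Rightarrow> real"
  assumes "B \<noteq> {}" "bdd_above (f ` B)" "bdd_above (g ` B)"
    and close: "\<And>y. y \<in> B \<Longrightarrow> \<bar>f y - g y\<bar> \<le> \<epsilon>"
  shows "\<bar>(SUP y\<in>B. f y) - (SUP y\<in>B. g y)\<bar> \<le> \<epsilon>"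
proof -
  have "(SUP y\<in>B. f y) \<le> (SUP y\<in>B. g y) + \<epsilon>"
  proof (rule cSUP_least[OF \<open>B \<noteq> {}\<close>])
    show "f y \<le> (SUP y\<in>B. g y) + \<epsilon>" if "y \<in> B" for y
      using cSUP_upper[OF that assms(3)] close[OF that] by linarith
  qed
  moreover have "(SUP y\<in>B. g y) \<le> (SUP y\<in>B. f y) + \<epsilon>"
  proof (rule cSUP_least[OF \<open>B \<noteq> {}\<close>])
    show "g y \<le> (SUP y\<in>B. f y) + \<epsilon>" if "y \<in> B" for y
      using cSUP_upper[OF that assms(2)] close[OF that] by linarith
  qed
  ultimately show ?thesis by linarith
qed

lemma continuous_on_cSUP_compact:
  fixes g :: "'a::metric_space \<Rightarrow> 'b::metric_space \<Rightarrow> real"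
  assumes T: "compact T" and S: "compact S"
    and g: "continuous_on (T \<times> S) (\<lambda>(x, y). g x y)"
    and B: "B \<subseteq> S" "B \<noteq> {}"
  shows "continuous_on T (\<lambda>x. SUP y\<in>B. g x y)"
  unfolding continuous_on_iff
proof (intro ballI allI impI)
  fix x and \<epsilon> :: real
  assume x: "x \<in> T" and \<epsilon>: "0 < \<epsilon>"
  have "uniformly_continuous_on (T \<times> S) (\<lambda>(x, y). g x y)"
    using g T S by (intro compact_uniformly_continuous compact_Times)
  then obtain \<delta> where \<delta>: "\<delta> > 0"
    and unif: "\<And>p q. p \<in> T \<times> S \<Longrightarrow> q \<in> T \<times> S \<Longrightarrow> dist q p < \<delta> \<Longrightarrow>
      dist ((\<lambda>(x, y). g x y) q) ((\<lambda>(x, y). g x y) p) < \<epsilon> / 2"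
    using \<epsilon> unfolding uniformly_continuous_on_def by (metis half_gt_zero)
  have "bounded ((\<lambda>(x, y). g x y) ` (T \<times> S))"
    using g T S by (intro compact_imp_bounded compact_continuous_image compact_Times)
  then have bdd: "bdd_above (g x' ` B)" if "x' \<in> T" for x'
    by (rule bdd_above_mono[OF bounded_imp_bdd_above]) (use that B in force)
  show "\<exists>\<delta>>0. \<forall>x'\<in>T. dist x' x < \<delta> \<longrightarrow> dist (SUP y\<in>B. g x' y) (SUP y\<in>B. g x y) < \<epsilon>"
  proof (rule exI[of _ \<delta>], intro conjI ballI impI \<delta>)
    fix x' assume x': "x' \<in> T" and "dist x' x < \<delta>"
    then have "\<bar>g x' y - g x y\<bar> \<le> \<epsilon> / 2" if "y \<in> B" for y
      using unif[of "(x, y)" "(x', y)"] x B that by (force simp: dist_Pair_Pair dist_real_def)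
    then have "\<bar>(SUP y\<in>B. g x' y) - (SUP y\<in>B. g x y)\<bar> \<le> \<epsilon> / 2"
      using B bdd x x' by (intro abs_cSUP_diff_le) auto
    then show "dist (SUP y\<in>B. g x' y) (SUP y\<in>B. g x y) < \<epsilon>"
      using \<epsilon> by (simp add: dist_real_def)
  qed
qed

lemma continuous_on_diagonal:
  assumes "continuous_on (T \<times> S \<times> S) (\<lambda>(x, y, z). p x y z)"
  shows "continuous_on (T \<times> S) (\<lambda>(x, y). p x y y)"
proof -
  have "continuous_on (T \<times> S) ((\<lambda>(x, y, z). p x y z) \<circ> (\<lambda>(x, y). (x, y, y)))"
    by (intro continuous_on_compose continuous_on_subset[OF assms])
       (auto intro!: continuous_intros simp: case_prod_unfold)
  then show ?thesis by (simp add: o_def case_prod_unfold)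
qed

lemma belief_compatible_subset: "belief_compatible ebar d \<subseteq> {0..ebar}"
  by (auto simp: belief_compatible_def emis_def)

lemma top_belief_compatible: "ebar \<ge> 0 \<Longrightarrow> ebar \<in> belief_compatible ebar d"
  unfolding belief_compatible_def emis_def by auto

lemma belief_compatible_const_top:
  "ebar \<ge> 0 \<Longrightarrow> belief_compatible ebar (\<lambda>e. ebar) = {ebar}"
  unfolding belief_compatible_def emis_def by (auto intro: order_antisym)

lemma const_top_in_policies: "ebar \<ge> 0 \<Longrightarrow> (\<lambda>e. ebar) \<in> policies ebar Theta prof"
  by (auto simp: policies_def belief_compatible_const_top emis_def)

lemma emission_d_const_top: "ebar \<ge> 0 \<Longrightarrow> emission_d ebar prof (\<lambda>e. ebar) = (\<lambda>\<theta>. ebar)"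
  unfolding emission_d_def by (intro ext Least_equality) (auto simp: belief_compatible_const_top)

lemma profit_d_const_top: "ebar \<ge> 0 \<Longrightarrow> profit_d ebar prof (\<lambda>e. ebar) \<theta> = prof \<theta> ebar"
  unfolding profit_d_def by (simp add: belief_compatible_const_top)

lemma profit_d_continuous:
  assumes "compact Theta" "ebar \<ge> 0"
    and "continuous_on (Theta \<times> {0..ebar}) (\<lambda>(\<theta>, e). prof \<theta> e)"
  shows "continuous_on Theta (profit_d ebar prof d)"
  unfolding profit_d_def[abs_def]
  by (rule continuous_on_cSUP_compact[OF assms(1) compact_Icc assms(3) belief_compatible_subset])
     (use top_belief_compatible[OF assms(2)] in blast)

lemma profit_d_ge_top:
  assumes "compact Theta" "ebar \<ge> 0"
    and prof: "continuous_on (Theta \<times> {0..ebar}) (\<lambda>(\<theta>, e). prof \<theta> e)"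
    and "\<theta> \<in> Theta"
  shows "prof \<theta> ebar \<le> profit_d ebar prof d \<theta>"
proof -
  have "bounded ((\<lambda>(\<theta>, e). prof \<theta> e) ` (Theta \<times> {0..ebar}))"
    using prof assms(1) by (intro compact_imp_bounded compact_continuous_image compact_Times) auto
  then have "bdd_above (prof \<theta> ` belief_compatible ebar d)"
    by (rule bdd_above_mono[OF bounded_imp_bdd_above])
       (use \<open>\<theta> \<in> Theta\<close> belief_compatible_subset in force)
  then show ?thesis
    unfolding profit_d_def by (rule cSUP_upper[OF top_belief_compatible[OF assms(2)]])
qed

lemma emission_d_belief_compatible:
  assumes d: "d \<in> policies ebar Theta prof" and \<theta>: "\<theta> \<in> Theta"
    and sc: "strictly_concave_on {0..ebar} (prof \<theta>)"
  shows "emission_d ebar prof d \<theta> \<in> belief_compatible ebar d"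
proof -
  let ?B = "belief_compatible ebar d"
  define is_max where "is_max e \<longleftrightarrow> e \<in> ?B \<and> (\<forall>e'\<in>?B. prof \<theta> e' \<le> prof \<theta> e)" for e
  obtain e0 where e0: "is_max e0"
    using d \<theta> unfolding policies_def is_max_def by blast
  have "{e. is_max e} \<subseteq> {e \<in> {0..ebar}. prof \<theta> e = prof \<theta> e0}"
  proof
    fix e assume "e \<in> {e. is_max e}"
    then have "is_max e" by simp
    with e0 have "e \<in> ?B" "prof \<theta> e = prof \<theta> e0"
      unfolding is_max_def by (blast, meson order_antisym)
    with belief_compatible_subset show "e \<in> {e \<in> {0..ebar}. prof \<theta> e = prof \<theta> e0}" by blast
  qed
  then have fin: "finite {e. is_max e}"
    by (rule finite_subset) (rule strictly_concave_on_level_set_finite[OF sc])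
  have "emission_d ebar prof d \<theta> = (LEAST e. is_max e)"
    by (simp add: emission_d_def is_max_def)
  also have "\<dots> = Min {e. is_max e}"
    using fin e0 by (blast intro: Least_Min)
  also have "\<dots> \<in> ?B"
    using fin e0 Min_in[OF fin] unfolding is_max_def by blast
  finally show ?thesis .
qed

lemma expect_const:
  "(LINT \<theta>:{thl..thh}|lborel. f \<theta>) = 1 \<Longrightarrow> expect thl thh f (\<lambda>\<theta>. c) = c"
  unfolding expect_def by simp

lemma expect_le_const:
  assumes f: "continuous_on {thl..thh} f" "\<forall>\<theta>\<in>{thl..thh}. f \<theta> \<ge> 0"
    and density: "(LINT \<theta>:{thl..thh}|lborel. f \<theta>) = 1"
    and g: "\<forall>\<theta>\<in>{thl..thh}. g \<theta> \<le> c" and "c \<ge> 0"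
  shows "expect thl thh f g \<le> c"
proof (cases "set_integrable lborel {thl..thh} (\<lambda>\<theta>. g \<theta> * f \<theta>)")
  case True
  have "set_integrable lborel {thl..thh} (\<lambda>\<theta>. c * f \<theta>)"
    by (intro borel_integrable_atLeastAtMost' continuous_intros f)
  then have "expect thl thh f g \<le> expect thl thh f (\<lambda>\<theta>. c)"
    unfolding expect_def using True f g by (intro set_integral_mono mult_right_mono) auto
  then show ?thesis by (simp add: expect_const[OF density])
next
  case False
  then have "expect thl thh f g = 0"
    by (simp add: expect_def set_lebesgue_integral_def set_integrable_def not_integrable_integral_eq)
  with \<open>c \<ge> 0\<close> show ?thesis by simp
qed

lemma expect_mono_continuous:
  assumes f: "continuous_on {thl..thh} f" "\<forall>\<theta>\<in>{thl..thh}. f \<theta> \<ge> 0"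
    and g: "continuous_on {thl..thh} g" and h: "continuous_on {thl..thh} h"
    and le: "\<forall>\<theta>\<in>{thl..thh}. g \<theta> \<le> h \<theta>"
  shows "expect thl thh f g \<le> expect thl thh f h"
  unfolding expect_def using f le
  by (intro set_integral_mono borel_integrable_atLeastAtMost' continuous_on_mult g h mult_right_mono)
     auto

theorem proposition2:
  fixes pit :: "real \<Rightarrow> real \<Rightarrow> real \<Rightarrow> real"
    and thl thh ebar :: real
    and f :: "real \<Rightarrow> real"
  defines "prof \<equiv> (\<lambda>\<theta> e. pit \<theta> e e)"
    and "d0 \<equiv> (\<lambda>e::real. ebar)"
  assumes ebar_pos: "ebar > 0"
    and Theta: "thl < thh"
    and f_cont: "continuous_on {thl..thh} f"
    and f_nonneg: "\<forall>\<theta>\<in>{thl..thh}. f \<theta> \<ge> 0"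
    and f_density: "(LINT \<theta>:{thl..thh}|lborel. f \<theta>) = 1"
    and incr: "\<forall>\<theta>\<in>{thl..thh}. \<forall>et\<in>{0..ebar}. \<forall>e1\<in>{0..ebar}. \<forall>e2\<in>{0..ebar}.
                 e1 < e2 \<longrightarrow> pit \<theta> e1 et < pit \<theta> e2 et"
    and decr: "\<forall>\<theta>\<in>{thl..thh}. \<forall>e\<in>{0..ebar}. \<forall>e1\<in>{0..ebar}. \<forall>e2\<in>{0..ebar}.
                 e1 < e2 \<longrightarrow> pit \<theta> e e2 < pit \<theta> e e1"
    and cont: "continuous_on ({thl..thh} \<times> {0..ebar} \<times> {0..ebar}) (\<lambda>(\<theta>, e, et). pit \<theta> e et)"
    and C2: "C2_on (interior ({thl..thh} \<times> {0..ebar} \<times> {0..ebar})) (\<lambda>(\<theta>, e, et). pit \<theta> e et)"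
    and concave: "\<forall>\<theta>\<in>{thl..thh}. strictly_concave_on {0..ebar} (prof \<theta>)"
    and top: "\<forall>\<theta>\<in>{thl..thh}. prof \<theta> 0 < prof \<theta> ebar"
  shows "d0 \<in> policies ebar {thl..thh} prof \<and>
         (\<forall>d\<in>policies ebar {thl..thh} prof.
            exp_emission thl thh f ebar prof d0 \<ge> exp_emission thl thh f ebar prof d \<and>
            exp_profit thl thh f ebar prof d0 \<le> exp_profit thl thh f ebar prof d)"
proof -
  have ebar: "ebar \<ge> 0" using ebar_pos by simp
  have prof_cont: "continuous_on ({thl..thh} \<times> {0..ebar}) (\<lambda>(\<theta>, e). prof \<theta> e)"
    unfolding prof_def by (rule continuous_on_diagonal[OF cont])
  have "exp_emission thl thh f ebar prof d \<le> ebar"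
    if "d \<in> policies ebar {thl..thh} prof" for d
    unfolding exp_emission_def
    using emission_d_belief_compatible[OF that] concave belief_compatible_subset
    by (intro expect_le_const[OF f_cont f_nonneg f_density] ebar) force
  moreover have "exp_emission thl thh f ebar prof d0 = ebar"
    by (simp add: exp_emission_def d0_def emission_d_const_top[OF ebar] expect_const[OF f_density])
  moreover have "exp_profit thl thh f ebar prof d0 \<le> exp_profit thl thh f ebar prof d" for d
    unfolding exp_profit_def using profit_d_ge_top[OF compact_Icc ebar prof_cont]
    by (intro expect_mono_continuous[OF f_cont f_nonneg]
        profit_d_continuous[OF compact_Icc ebar prof_cont])
       (simp add: d0_def profit_d_const_top[OF ebar])
  ultimately show ?thesis
    by (simp add: d0_def const_top_in_policies[OF ebar])
qed

end
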